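(* For every even $n\ge4$, $$f_n(\{2,3,\dots,\tfrac n2\})=2^{n-1}+\sum_{i=1}^{n/2-1}\sum_{j=1}^{n/2-1}\binom{i+j-2}{i-1}2^{n-i-j-2}.$$
   Context: For $m\ge1$ and a set $B$ of positive integers, $f_m(B)$ denotes the number of linear orders $q$ on $[m]$ such that for every triple $i<j<k$ in $[m]$: if $j\in B$ then $i$ is not ranked last among $\{i,j,k\}$ in $q$, and if $j\notin B$ then $k$ is not ranked first among $\{i,j,k\}$ in $q$. *)

theory Defs
  imports Main
begin

text \<open>Linear orders q on [m] = {1..m} are represented as relations r with
  linear_order_on {1..m} r (reflexive; (x,y) in r means x is ranked weakly before y).
  "x is ranked last among {i,j,k}" means the other two are ranked before x;
  "x is ranked first" means x is ranked before the other two.\<close>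

definition good_order :: "nat \<Rightarrow> nat set \<Rightarrow> (nat \<times> nat) set \<Rightarrow> bool" where
  "good_order m B r \<longleftrightarrow>
     linear_order_on {1..m} r \<and>
     (\<forall>i j k. 1 \<le> i \<and> i < j \<and> j < k \<and> k \<le> m \<longrightarrow>
        (j \<in> B \<longrightarrow> \<not> ((j, i) \<in> r \<and> (k, i) \<in> r)) \<and>
        (j \<notin> B \<longrightarrow> \<not> ((k, i) \<in> r \<and> (k, j) \<in> r)))"

definition f :: "nat \<Rightarrow> nat set \<Rightarrow> nat" where
  "f m B = card {r. good_order m B r}"

end

theory Submission
  imports Defs Complex_Main
begin

(*
  A linear order on {1..m} is encoded by the list of its elements from first to last, and such
  lists are built by inserting 1, 2, ..., m one letter at a time, each new letter being the
  largest so far. For B = {2..h} the new letter may go exactly into the slots after the last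
  "forced" position, and the slack of a word (the number of admissible slots minus one) evolves
  by a rule that only sees the old slack t and the chosen slot: a letter <= h gives slack 0 in
  the t non-final slots and t + 1 in the final one, a letter > h gives slacks t, ..., 1 in the
  non-final slots and 1 in the final one. So sums of g (slack) over good words of length m + 1
  are sums of (T g) (slack) over good words of length m for two explicit linear operators T,
  the number of good words of length n = 2h is an iterate of these operators, and evaluating
  it with hockey-stick sums and sum_{k<=h} C(h+k,k) / 2^k = 2^h gives the formula.
*)

section \<open>Linear orders as lists\<close>

fun list_order :: "'a list \<Rightarrow> 'a rel" where
  "list_order [] = {}"
| "list_order (x # w) = {x} \<times> set (x # w) \<union> list_order w"

lemma list_order_subset: "list_order w \<subseteq> set w \<times> set w"
  by (induction w) auto

lemma list_order_nth_iff:
  assumes "distinct w" "a < length w" "b < length w"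
  shows "(w ! a, w ! b) \<in> list_order w \<longleftrightarrow> a \<le> b"
  using assms
proof (induction w arbitrary: a b)
  case (Cons x w)
  have "x \<notin> set w" using Cons.prems by simp
  then show ?case
    using Cons list_order_subset[of w]
    by (cases a; cases b) (auto simp: nth_eq_iff_index_eq)
qed simp

lemma linear_order_on_list_order:
  assumes "distinct w"
  shows "linear_order_on (set w) (list_order w)"
  using assms
proof (induction w)
  case Nil
  then show ?case by simp
next
  case (Cons x w)
  let ?r = "list_order (x # w)"
  have x: "x \<notin> set w" and sub: "list_order w \<subseteq> set w \<times> set w"
    using Cons.prems list_order_subset by auto
  have IH: "refl_on (set w) (list_order w)" "trans (list_order w)" "antisym (list_order w)"
    "total_on (set w) (list_order w)"
    using Cons by (simp_all add: linear_order_on_def partial_order_on_def preorder_on_def)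
  have "refl_on (set (x # w)) ?r"
    using IH(1) by (auto simp: refl_on_def)
  moreover have "trans ?r"
  proof (rule transI)
    fix a b c assume "(a, b) \<in> ?r" "(b, c) \<in> ?r"
    then show "(a, c) \<in> ?r"
      using IH(2) sub x by (auto dest: transD)
  qed
  moreover have "antisym ?r"
    using IH(3) sub x by (auto simp: antisym_def)
  moreover have "total_on (set (x # w)) ?r"
    using IH(4) by (auto simp: total_on_def)
  ultimately show ?case
    using list_order_subset[of "x # w"]
    unfolding linear_order_on_def partial_order_on_def preorder_on_def by blast
qed

lemma list_order_injective:
  assumes "distinct u" "distinct v" "list_order u = list_order v"
  shows "u = v"
  using assms
proof (induction u arbitrary: v)
  case Nil
  then show ?case by (cases v) auto
next
  case (Cons x u)
  then obtain y v' where v: "v = y # v'" by (cases v) auto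
  have "(x, x) \<in> list_order v" "(y, y) \<in> list_order (x # u)"
    using Cons.prems(3) v by auto
  then have "x \<in> set v" "y \<in> set (x # u)"
    using list_order_subset by blast+
  then have "(x, y) \<in> list_order (x # u)" "(y, x) \<in> list_order (x # u)"
    using Cons.prems(3) v by auto
  then have "x = y"
    using linear_order_on_list_order[OF Cons.prems(1)]
    by (auto simp: linear_order_on_def partial_order_on_def antisym_def)
  have tail: "list_order w = list_order (z # w) - {z} \<times> UNIV" if "z \<notin> set w"
    for z and w :: "'a list"
    using that list_order_subset[of w] by auto
  have "list_order u = list_order (x # u) - {x} \<times> UNIV"
    by (rule tail) (use Cons.prems(1) in simp)
  also have "\<dots> = list_order (y # v') - {y} \<times> UNIV"
    using Cons.prems(3) v \<open>x = y\<close> by (simp only:)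
  also have "\<dots> = list_order v'"
    by (rule tail[symmetric]) (use Cons.prems(2) v in simp)
  finally have "list_order u = list_order v'" .
  then show ?case
    using Cons v \<open>x = y\<close> by simp
qed

lemma ex_list_order:
  assumes "finite A" "linear_order_on A r"
  shows "\<exists>w. distinct w \<and> set w = A \<and> list_order w = r"
  using assms
proof (induction "card A" arbitrary: A r)
  case 0
  then show ?case
    by (auto simp: linear_order_on_def partial_order_on_def preorder_on_def)
next
  case (Suc n)
  have sub: "r \<subseteq> A \<times> A" and refl: "refl_on A r" and trans: "trans r" and antisym: "antisym r"
    and total: "total_on A r"
    using Suc.prems(2) by (simp_all add: linear_order_on_def partial_order_on_def preorder_on_def)
  have "A \<noteq> {}"
    using Suc.hyps(2) by auto
  have "finite r"
    using Suc.prems(1) finite_subset[OF sub] by blast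
  then have "well_order_on A r"
    using Suc.prems(2) linear_order_on_well_order_on by blast
  then have "wf (r - Id)"
    by (simp add: well_order_on_def)
  then obtain x where x: "x \<in> A" and minimal: "\<And>y. (y, x) \<in> r - Id \<Longrightarrow> y \<notin> A"
    using wfE_min' \<open>A \<noteq> {}\<close> by blast
  have least: "(x, y) \<in> r" if "y \<in> A" for y
  proof (cases "y = x")
    case True
    then show ?thesis using refl x by (simp add: refl_on_def)
  next
    case False
    then show ?thesis using total minimal[of y] that x by (auto simp: total_on_def)
  qed
  let ?r = "r \<inter> (A - {x}) \<times> (A - {x})"
  have "linear_order_on (A - {x}) ?r"
    using refl trans antisym total
    unfolding linear_order_on_def partial_order_on_def preorder_on_def
    by (auto simp: refl_on_def total_on_def antisym_def trans_def)
  moreover have "card (A - {x}) = n"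
    using Suc.hyps(2) x by simp
  ultimately obtain w where w: "distinct w" "set w = A - {x}" "list_order w = ?r"
    using Suc.hyps(1) Suc.prems(1) by blast
  have "set (x # w) = A"
    using w(2) x by auto
  then have "list_order (x # w) = {x} \<times> A \<union> r \<inter> (A - {x}) \<times> (A - {x})"
    using w(3) by simp
  also have "\<dots> = r"
    using antisymD[OF antisym] least sub by blast
  finally have "list_order (x # w) = r" .
  then show ?case
    using w \<open>set (x # w) = A\<close> by (metis Diff_iff distinct.simps(2) singletonI)
qed

definition good_word :: "nat \<Rightarrow> nat list \<Rightarrow> bool" where
  "good_word h w \<longleftrightarrow>
     (\<forall>a<length w. \<forall>b<length w. \<forall>c<length w. w ! a < w ! b \<longrightarrow> w ! b < w ! c \<longrightarrow>
       (w ! b \<le> h \<longrightarrow> \<not> (b < a \<and> c < a)) \<and> (h < w ! b \<longrightarrow> \<not> (c < a \<and> c < b)))"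

lemma good_wordD:
  assumes "good_word h w" "a < length w" "b < length w" "c < length w"
    and "w ! a < w ! b" "w ! b < w ! c"
  shows "w ! b \<le> h \<Longrightarrow> \<not> (b < a \<and> c < a)" and "h < w ! b \<Longrightarrow> \<not> (c < a \<and> c < b)"
  using assms unfolding good_word_def by blast+

lemma good_order_list_order_iff:
  assumes w: "distinct w" "set w = {1..m}"
  shows "good_order m {2..h} (list_order w) \<longleftrightarrow> good_word h w"
proof -
  let ?L = "list_order w"
  let ?P = "\<lambda>i j k. (j \<in> {2..h} \<longrightarrow> \<not> ((j, i) \<in> ?L \<and> (k, i) \<in> ?L))
    \<and> (j \<notin> {2..h} \<longrightarrow> \<not> ((k, i) \<in> ?L \<and> (k, j) \<in> ?L))"
  have "good_order m {2..h} ?L \<longleftrightarrow> (\<forall>i j k. 1 \<le> i \<and> i < j \<and> j < k \<and> k \<le> m \<longrightarrow> ?P i j k)"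
    using linear_order_on_list_order[OF w(1)] w(2) by (simp add: good_order_def)
  also have "\<dots> \<longleftrightarrow> (\<forall>i\<in>set w. \<forall>j\<in>set w. \<forall>k\<in>set w. i < j \<longrightarrow> j < k \<longrightarrow> ?P i j k)"
  proof (intro iffI allI impI ballI)
    fix i j k
    assume P: "\<forall>i\<in>set w. \<forall>j\<in>set w. \<forall>k\<in>set w. i < j \<longrightarrow> j < k \<longrightarrow> ?P i j k"
      and "1 \<le> i \<and> i < j \<and> j < k \<and> k \<le> m"
    then have "i \<in> set w" "j \<in> set w" "k \<in> set w" "i < j" "j < k"
      using w(2) by auto
    then show "?P i j k"
      using P by blast
  qed (use w(2) in simp)
  also have "\<dots> \<longleftrightarrow> (\<forall>a<length w. \<forall>b<length w. \<forall>c<length w.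
      w ! a < w ! b \<longrightarrow> w ! b < w ! c \<longrightarrow> ?P (w ! a) (w ! b) (w ! c))"
    by (simp only: all_set_conv_all_nth)
  also have "\<dots> \<longleftrightarrow> good_word h w"
  proof -
    have "?P (w ! a) (w ! b) (w ! c) \<longleftrightarrow>
        (w ! b \<le> h \<longrightarrow> \<not> (b < a \<and> c < a)) \<and> (h < w ! b \<longrightarrow> \<not> (c < a \<and> c < b))"
      if "a < length w" "b < length w" "c < length w" "w ! a < w ! b" "w ! b < w ! c" for a b c
    proof -
      have "a \<noteq> b" "b \<noteq> c" "a \<noteq> c" "1 \<le> w ! a"
        using that nth_mem[OF that(1)] w(2) by auto
      then show ?thesis
        using that by (auto simp: list_order_nth_iff[OF w(1)])
    qed
    then show ?thesis
      unfolding good_word_def by blast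
  qed
  finally show ?thesis .
qed

section \<open>Inserting a new largest letter\<close>

definition insert_at :: "nat \<Rightarrow> 'a \<Rightarrow> 'a list \<Rightarrow> 'a list" where
  "insert_at i x w = take i w @ x # drop i w"

definition skip_index :: "nat \<Rightarrow> nat \<Rightarrow> nat" where
  "skip_index i a = (if a < i then a else Suc a)"

lemma skip_index_less_iff [simp]: "skip_index i a < skip_index i b \<longleftrightarrow> a < b"
  by (simp add: skip_index_def)

lemma skip_index_less_self_iff [simp]: "skip_index i a < i \<longleftrightarrow> a < i"
  by (simp add: skip_index_def)

lemma skip_index_neq_self [simp]: "skip_index i a \<noteq> i"
  by (simp add: skip_index_def)

lemma skip_index_eq_self: "a < i \<Longrightarrow> skip_index i a = a"
  by (simp add: skip_index_def)

lemma skip_index_min: "skip_index i (min a b) = min (skip_index i a) (skip_index i b)"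
  by (simp add: skip_index_def min_def)

lemma ex_skip_index:
  assumes "c < Suc n" "c \<noteq> i" "i \<le> n"
  obtains a where "a < n" "c = skip_index i a"
proof (cases "c < i")
  case True
  then show ?thesis using assms that[of c] by (simp add: skip_index_def)
next
  case False
  then show ?thesis using assms that[of "c - 1"] by (simp add: skip_index_def)
qed

lemma length_insert_at: "i \<le> length w \<Longrightarrow> length (insert_at i x w) = Suc (length w)"
  by (simp add: insert_at_def)

lemma nth_insert_at_self: "i \<le> length w \<Longrightarrow> insert_at i x w ! i = x"
  by (simp add: insert_at_def nth_append)

lemma nth_insert_at_skip_index:
  "i \<le> length w \<Longrightarrow> a < length w \<Longrightarrow> insert_at i x w ! skip_index i a = w ! a"
  by (auto simp: insert_at_def skip_index_def nth_append min_def)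

lemma skip_index_less_Suc_length: "a < length w \<Longrightarrow> skip_index i a < Suc (length w)"
  by (simp add: skip_index_def)

lemma set_insert_at: "set (insert_at i x w) = insert x (set w)"
  unfolding insert_at_def by (metis Un_insert_right append_take_drop_id list.simps(15) set_append)

lemma distinct_insert_at: "distinct (insert_at i x w) \<longleftrightarrow> distinct w \<and> x \<notin> set w"
proof -
  have "distinct (take i w @ x # drop i w) \<longleftrightarrow>
      distinct (take i w @ drop i w) \<and> x \<notin> set (take i w @ drop i w)"
    unfolding distinct_append set_append by auto
  then show ?thesis
    by (simp only: insert_at_def append_take_drop_id)
qed

lemma insert_at_eq_iff:
  assumes "x \<notin> set u" "i \<le> length u" "j \<le> length v"
  shows "insert_at i x u = insert_at j x v \<longleftrightarrow> u = v \<and> i = j"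
proof
  assume eq: "insert_at i x u = insert_at j x v"
  have "x \<notin> set (take i u)" "x \<notin> set (drop i u)"
    using assms(1) by (auto dest: in_set_takeD in_set_dropD)
  then have "take i u = take j v" "drop i u = drop j v"
    using eq by (simp_all add: insert_at_def append_Cons_eq_iff)
  then show "u = v \<and> i = j"
    using assms(2,3) by (metis append_take_drop_id length_take min.absorb2)
qed simp

(*
  Position p of w is forced if a new letter larger than all letters of w must be placed after p:
  either a larger letter b <= h stands before p (the smallest letter of the triple must not come
  last), or p is the earlier position of a pair whose larger letter exceeds h (the largest letter
  of the triple must not come first).
*)
definition forced :: "nat \<Rightarrow> nat list \<Rightarrow> nat set" where
  "forced h w =
     {a. \<exists>b<length w. a < length w \<and> w ! a < w ! b \<and> w ! b \<le> h \<and> b < a}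
     \<union> {min a b | a b. a < length w \<and> b < length w \<and> w ! a < w ! b \<and> h < w ! b}"

definition first_slot :: "nat \<Rightarrow> nat list \<Rightarrow> nat" where
  "first_slot h w = (if forced h w = {} then 0 else Suc (Max (forced h w)))"

definition slack :: "nat \<Rightarrow> nat list \<Rightarrow> nat" where
  "slack h w = length w - first_slot h w"

lemma forced_lowI:
  "\<lbrakk>a < length w; b < length w; w ! a < w ! b; w ! b \<le> h; b < a\<rbrakk> \<Longrightarrow> a \<in> forced h w"
  unfolding forced_def by blast

lemma forced_highI:
  "\<lbrakk>a < length w; b < length w; w ! a < w ! b; h < w ! b\<rbrakk> \<Longrightarrow> min a b \<in> forced h w"
  unfolding forced_def by blast

lemma forcedE:
  assumes "p \<in> forced h w"
  obtains (low) b where "p < length w" "b < length w" "w ! p < w ! b" "w ! b \<le> h" "b < p"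
    | (high) a b where "a < length w" "b < length w" "w ! a < w ! b" "h < w ! b" "p = min a b"
  using assms unfolding forced_def by blast

lemma forced_subset: "forced h w \<subseteq> {..<length w}"
  by (auto simp: min_def elim: forcedE)

lemma first_slot_le_iff: "first_slot h w \<le> i \<longleftrightarrow> (\<forall>p\<in>forced h w. p < i)"
  using finite_subset[OF forced_subset]
  by (auto simp: first_slot_def Max_less_iff Suc_le_eq)

lemma first_slot_le_length: "first_slot h w \<le> length w"
  using first_slot_le_iff forced_subset by blast

lemma first_slot_eqI:
  assumes "\<And>i. (\<forall>p\<in>forced h w. p < i) \<longleftrightarrow> k \<le> i"
  shows "first_slot h w = k"
  by (metis assms first_slot_le_iff le_antisym order_refl)

context
  fixes w :: "nat list" and i x :: nat
  assumes slot: "i \<le> length w" and new_max: "\<forall>y\<in>set w. y < x"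
begin

lemmas length_ins = length_insert_at[OF slot]
lemmas nth_ins_self = nth_insert_at_self[OF slot]
lemmas nth_ins_skip_index = nth_insert_at_skip_index[OF slot]

lemma slot_less_Suc_length: "i < Suc (length w)"
  using slot by simp

lemma nth_less_new: "a < length w \<Longrightarrow> w ! a < x"
  using new_max nth_mem by blast

lemmas insert_at_simps =
  length_ins nth_ins_self nth_ins_skip_index skip_index_less_Suc_length slot_less_Suc_length
  nth_less_new

lemma ex_skip_index_ins:
  assumes "c < length (insert_at i x w)" "c \<noteq> i"
  obtains a where "a < length w" "c = skip_index i a"
  using ex_skip_index assms slot length_ins by metis

lemma nth_ins_less_new: "c < length (insert_at i x w) \<Longrightarrow> c \<noteq> i \<Longrightarrow> insert_at i x w ! c < x"
  by (metis ex_skip_index_ins nth_ins_skip_index nth_less_new)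

lemma nth_ins_le_new: "c < length (insert_at i x w) \<Longrightarrow> insert_at i x w ! c \<le> x"
  by (metis nth_ins_less_new nth_ins_self less_imp_le order_refl)

lemma good_word_of_insert_at:
  assumes "good_word h (insert_at i x w)"
  shows "good_word h w"
  unfolding good_word_def
proof (intro allI impI)
  fix a b c assume abc: "a < length w" "b < length w" "c < length w" "w ! a < w ! b" "w ! b < w ! c"
  then show "(w ! b \<le> h \<longrightarrow> \<not> (b < a \<and> c < a)) \<and> (h < w ! b \<longrightarrow> \<not> (c < a \<and> c < b))"
    using good_wordD[OF assms, of "skip_index i a" "skip_index i b" "skip_index i c"]
    by (simp add: insert_at_simps)
qed

lemma forced_less_of_insert_at:
  assumes "good_word h (insert_at i x w)" "p \<in> forced h w"
  shows "p < i"
  using assms(2)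
proof (cases rule: forcedE)
  case (low b)
  then have "\<not> i < skip_index i p"
    using good_wordD(1)[OF assms(1), of "skip_index i p" "skip_index i b" i]
    by (simp add: insert_at_simps)
  then show ?thesis
    using skip_index_neq_self[of i p] by (simp add: not_less order_le_less)
next
  case (high a b)
  then have "\<not> (i < skip_index i a \<and> i < skip_index i b)"
    using good_wordD(2)[OF assms(1), of "skip_index i a" "skip_index i b" i]
    by (simp add: insert_at_simps)
  then have "a < i \<or> b < i"
    using skip_index_neq_self[of i a] skip_index_neq_self[of i b]
    by (auto simp: not_less order_le_less)
  then show ?thesis
    using high(5) by linarith
qed

lemma good_word_insert_atI:
  assumes good: "good_word h w" and slot_ok: "first_slot h w \<le> i"
  shows "good_word h (insert_at i x w)"
  unfolding good_word_def
proof (intro allI impI)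
  let ?v = "insert_at i x w"
  have forced_less: "p < i" if "p \<in> forced h w" for p
    using slot_ok that first_slot_le_iff by blast
  fix a' b' c'
  assume abc: "a' < length ?v" "b' < length ?v" "c' < length ?v"
    "?v ! a' < ?v ! b'" "?v ! b' < ?v ! c'"
  then have "a' \<noteq> i" "b' \<noteq> i"
    using nth_ins_le_new nth_ins_self by (metis leD)+
  then obtain a b
    where ab: "a < length w" "b < length w" "a' = skip_index i a" "b' = skip_index i b"
    using ex_skip_index_ins abc(1,2) by metis
  then have val: "w ! a < w ! b"
    using abc(4) by (simp add: nth_ins_skip_index)
  show "(?v ! b' \<le> h \<longrightarrow> \<not> (b' < a' \<and> c' < a')) \<and> (h < ?v ! b' \<longrightarrow> \<not> (c' < a' \<and> c' < b'))"
  proof (cases "c' = i")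
    case True
    have "\<not> (b < a \<and> i < skip_index i a)" if "w ! b \<le> h"
      using forced_less[OF forced_lowI[OF ab(1,2) val that]] by (auto simp: skip_index_def)
    moreover have "\<not> (i < skip_index i a \<and> i < skip_index i b)" if "h < w ! b"
      using forced_less[OF forced_highI[OF ab(1,2) val that]]
      by (auto simp: skip_index_def min_def split: if_splits)
    ultimately show ?thesis
      using True ab by (simp add: nth_ins_skip_index)
  next
    case False
    then obtain c where "c < length w" "c' = skip_index i c"
      using ex_skip_index_ins abc(3) by metis
    then show ?thesis
      using good_wordD[OF good ab(1,2)] abc ab by (simp add: nth_ins_skip_index)
  qed
qed

lemma good_word_insert_at_iff:
  "good_word h (insert_at i x w) \<longleftrightarrow> good_word h w \<and> first_slot h w \<le> i"
  using good_word_of_insert_at forced_less_of_insert_at good_word_insert_atI first_slot_le_iff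
  by blast

lemma forced_insert_atE:
  assumes "p \<in> forced h (insert_at i x w)" "first_slot h w \<le> i"
  obtains "p \<in> forced h w" | "x \<le> h" "i < p" | "h < x" "p \<le> i" "p < length w"
proof -
  have old: "q < i" if "q \<in> forced h w" for q
    using assms(2) that first_slot_le_iff by blast
  from assms(1) show thesis
  proof (cases rule: forcedE)
    case (low b')
    show thesis
    proof (cases "b' = i")
      case True
      then show thesis using low nth_ins_self that(2) by simp
    next
      case False
      have "p \<noteq> i"
        using low nth_ins_le_new nth_ins_self by (metis leD order.strict_trans2)
      then obtain a b
        where ab: "a < length w" "p = skip_index i a" "b < length w" "b' = skip_index i b"
        using ex_skip_index_ins low(1,2) False by metis
      then have "a \<in> forced h w"
        using forced_lowI[of a w b h] low by (simp add: nth_ins_skip_index)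
      then show thesis
        using that(1) ab old skip_index_eq_self by simp
    qed
  next
    case (high a' b')
    have "a' \<noteq> i"
      using high nth_ins_self nth_ins_le_new by (metis leD)
    then obtain a where a: "a < length w" "a' = skip_index i a"
      using ex_skip_index_ins high(1) by metis
    show thesis
    proof (cases "b' = i")
      case True
      then show thesis
        using that(3) high a nth_ins_self \<open>a' \<noteq> i\<close> slot by (auto simp: min_def skip_index_def)
    next
      case False
      then obtain b where b: "b < length w" "b' = skip_index i b"
        using ex_skip_index_ins high(2) by metis
      then have "min a b \<in> forced h w"
        using forced_highI[of a w b h] high a by (simp add: nth_ins_skip_index)
      then show thesis
        using that(1) old[of "min a b"] high(5) a b
        by (simp add: skip_index_min[symmetric] skip_index_eq_self)
    qed
  qed
qed

lemma forced_subset_forced_insert_at: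
  assumes "first_slot h w \<le> i"
  shows "forced h w \<subseteq> forced h (insert_at i x w)"
proof
  fix p
  assume p: "p \<in> forced h w"
  then have "p < i"
    using assms first_slot_le_iff by blast
  from p show "p \<in> forced h (insert_at i x w)"
  proof (cases rule: forcedE)
    case (low b)
    then have "skip_index i p \<in> forced h (insert_at i x w)"
      using forced_lowI[of "skip_index i p" "insert_at i x w" "skip_index i b" h]
      by (simp add: insert_at_simps)
    then show ?thesis using \<open>p < i\<close> skip_index_eq_self by simp
  next
    case (high a b)
    then have "min (skip_index i a) (skip_index i b) \<in> forced h (insert_at i x w)"
      using forced_highI[of "skip_index i a" "insert_at i x w" "skip_index i b" h]
      by (simp add: insert_at_simps)
    then show ?thesis
      using \<open>p < i\<close> high(5) by (simp add: skip_index_min[symmetric] skip_index_eq_self)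
  qed
qed

lemma forced_insert_at_low:
  assumes "x \<le> h" "first_slot h w \<le> i"
  shows "forced h (insert_at i x w) = forced h w \<union> {i<..length w}"
proof (intro equalityI subsetI)
  fix p
  assume p: "p \<in> forced h (insert_at i x w)"
  have "p < Suc (length w)"
    using p forced_subset[of h "insert_at i x w"] length_ins by auto
  show "p \<in> forced h w \<union> {i<..length w}"
    by (rule forced_insert_atE[OF p assms(2)]) (use assms(1) \<open>p < Suc (length w)\<close> in auto)
next
  fix p
  assume "p \<in> forced h w \<union> {i<..length w}"
  then show "p \<in> forced h (insert_at i x w)"
  proof
    assume "p \<in> {i<..length w}"
    then show ?thesis
      using forced_lowI[of p "insert_at i x w" i h] nth_ins_less_new[of p] nth_ins_self assms(1)
        length_ins
      by simp
  qed (use forced_subset_forced_insert_at[OF assms(2)] in blast)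
qed

lemma forced_insert_at_high:
  assumes "h < x" "first_slot h w \<le> i"
  shows "forced h (insert_at i x w) = (if i < length w then {..i} else {..<i})"
proof (intro equalityI subsetI)
  fix p
  assume p: "p \<in> forced h (insert_at i x w)"
  have old: "p < i" if "p \<in> forced h w"
    using that assms(2) first_slot_le_iff by blast
  show "p \<in> (if i < length w then {..i} else {..<i})"
    by (rule forced_insert_atE[OF p assms(2)]) (use assms(1) old in auto)
next
  fix p
  assume p: "p \<in> (if i < length w then {..i} else {..<i})"
  show "p \<in> forced h (insert_at i x w)"
  proof (cases "p < i")
    case True
    then have "min p i \<in> forced h (insert_at i x w)"
      using forced_highI[of p "insert_at i x w" i h] nth_ins_less_new[of p] nth_ins_self assms(1)
        length_ins slot
      by simp
    then show ?thesis using True by simp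
  next
    case False
    then have "p = i" "i < length w" using p by (auto split: if_splits)
    moreover have "insert_at i x w ! Suc i < x"
      using nth_ins_skip_index[of i] nth_less_new[of i] \<open>i < length w\<close> by (simp add: skip_index_def)
    ultimately have "min (Suc i) i \<in> forced h (insert_at i x w)"
      using forced_highI[of "Suc i" "insert_at i x w" i h] nth_ins_self assms(1) length_ins by simp
    then show ?thesis using \<open>p = i\<close> by simp
  qed
qed

lemma slack_insert_at_low:
  assumes "x \<le> h" "first_slot h w \<le> i"
  shows "slack h (insert_at i x w) = (if i < length w then 0 else Suc (slack h w))"
proof (cases "i < length w")
  case True
  have "first_slot h (insert_at i x w) = Suc (length w)"
  proof (rule first_slot_eqI)
    fix j
    show "(\<forall>p\<in>forced h (insert_at i x w). p < j) \<longleftrightarrow> Suc (length w) \<le> j"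
      using forced_insert_at_low[OF assms] True forced_subset[of h w] assms(2) first_slot_le_length
      by (auto simp: Suc_le_eq)
  qed
  then show ?thesis using True by (simp add: slack_def length_ins)
next
  case False
  then have "forced h (insert_at i x w) = forced h w"
    using forced_insert_at_low[OF assms] slot by auto
  then have "first_slot h (insert_at i x w) = first_slot h w"
    by (simp add: first_slot_def)
  then show ?thesis
    using False first_slot_le_length[of h w] by (simp add: slack_def length_ins Suc_diff_le)
qed

lemma slack_insert_at_high:
  assumes "h < x" "first_slot h w \<le> i"
  shows "slack h (insert_at i x w) = (if i < length w then length w - i else 1)"
proof (cases "i < length w")
  case True
  have "first_slot h (insert_at i x w) = Suc i"
    by (rule first_slot_eqI) (use forced_insert_at_high[OF assms] True in \<open>auto simp: Suc_le_eq\<close>)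
  then show ?thesis using True by (simp add: slack_def length_ins)
next
  case False
  have "first_slot h (insert_at i x w) = i"
  proof (rule first_slot_eqI)
    fix j
    have "(\<forall>p\<in>{..<i}. p < j) \<longleftrightarrow> i \<le> j"
      by (cases i) (auto simp: Suc_le_eq)
    then show "(\<forall>p\<in>forced h (insert_at i x w). p < j) \<longleftrightarrow> i \<le> j"
      using forced_insert_at_high[OF assms] False by simp
  qed
  then show ?thesis
    using False slot unfolding slack_def length_ins by simp
qed

end

section \<open>Counting good words by their slack\<close>

definition good_words :: "nat \<Rightarrow> nat \<Rightarrow> nat list set" where
  "good_words h m = {w. distinct w \<and> set w = {1..m} \<and> good_word h w}"

lemma length_good_words: "w \<in> good_words h m \<Longrightarrow> length w = m"
  unfolding good_words_def using distinct_card by fastforce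

lemma finite_good_words: "finite (good_words h m)"
proof (rule finite_subset)
  show "good_words h m \<subseteq> {w. set w \<subseteq> {1..m} \<and> length w = m}"
    using length_good_words unfolding good_words_def by auto
qed (simp add: finite_lists_length_eq)

lemma good_words_0: "good_words h 0 = {[]}"
  unfolding good_words_def good_word_def by auto

lemma good_words_Suc:
  "good_words h (Suc m) =
     (\<lambda>(w, i). insert_at i (Suc m) w) ` (SIGMA w:good_words h m. {first_slot h w..m})"
proof (intro equalityI subsetI)
  fix v assume "v \<in> good_words h (Suc m)"
  then have v: "distinct v" "set v = {1..Suc m}" "good_word h v"
    unfolding good_words_def by blast+
  obtain w i where v_eq: "v = insert_at i (Suc m) w" and i: "i \<le> length w"
  proof -
    have "Suc m \<in> set v"
      using v(2) by simp
    then obtain us vs where "v = us @ Suc m # vs"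
      by (meson split_list)
    then show thesis
      using that[of "length us" "us @ vs"] by (simp add: insert_at_def)
  qed
  have w: "distinct w" "Suc m \<notin> set w"
    using v(1) by (simp_all add: v_eq distinct_insert_at)
  have "set w = set v - {Suc m}"
    using w(2) by (simp add: v_eq set_insert_at)
  then have set_w: "set w = {1..m}"
    using v(2) by (simp add: atLeastAtMostSuc_conv)
  then have "length w = m"
    using distinct_card[OF w(1)] by simp
  moreover have "good_word h w" "first_slot h w \<le> i"
    using good_word_insert_at_iff[OF i, of "Suc m" h] v(3) set_w by (simp_all add: v_eq)
  ultimately show
    "v \<in> (\<lambda>(w, i). insert_at i (Suc m) w) ` (SIGMA w:good_words h m. {first_slot h w..m})"
    using v_eq i w(1) set_w by (intro image_eqI[of _ _ "(w, i)"]) (auto simp: good_words_def)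
next
  fix v
  assume "v \<in> (\<lambda>(w, i). insert_at i (Suc m) w) ` (SIGMA w:good_words h m. {first_slot h w..m})"
  then obtain w i where wi: "w \<in> good_words h m" "first_slot h w \<le> i" "i \<le> m"
    and v: "v = insert_at i (Suc m) w"
    by auto
  have w: "distinct w" "set w = {1..m}" "good_word h w" "length w = m"
    using wi(1) length_good_words unfolding good_words_def by auto
  then have "good_word h v"
    using good_word_insert_at_iff[of i w "Suc m" h] wi v by auto
  moreover have "distinct v" "set v = {1..Suc m}"
    using w v by (auto simp: distinct_insert_at set_insert_at)
  ultimately show "v \<in> good_words h (Suc m)"
    unfolding good_words_def by blast
qed

lemma inj_on_insert_at_good_words:
  "inj_on (\<lambda>(w, i). insert_at i (Suc m) w) (SIGMA w:good_words h m. {first_slot h w..m})"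
proof (rule inj_onI, clarsimp)
  fix u i v j
  assume "u \<in> good_words h m" "i \<le> m" "v \<in> good_words h m" "j \<le> m"
    "insert_at i (Suc m) u = insert_at j (Suc m) v"
  then show "u = v \<and> i = j"
    using insert_at_eq_iff[of "Suc m" u i j v] length_good_words by (auto simp: good_words_def)
qed

lemma sum_good_words_Suc:
  "(\<Sum>v\<in>good_words h (Suc m). g v) =
     (\<Sum>w\<in>good_words h m. \<Sum>i = first_slot h w..m. g (insert_at i (Suc m) w))"
proof -
  have "(\<Sum>v\<in>good_words h (Suc m). g v)
      = (\<Sum>(w, i)\<in>(SIGMA w:good_words h m. {first_slot h w..m}). g (insert_at i (Suc m) w))"
    by (rule sum.reindex_cong[OF inj_on_insert_at_good_words good_words_Suc]) auto
  then show ?thesis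
    by (simp add: sum.Sigma[OF finite_good_words])
qed

definition low_transfer :: "(nat \<Rightarrow> nat) \<Rightarrow> nat \<Rightarrow> nat" where
  "low_transfer g t = t * g 0 + g (Suc t)"

definition high_transfer :: "(nat \<Rightarrow> nat) \<Rightarrow> nat \<Rightarrow> nat" where
  "high_transfer g t = (\<Sum>k = 1..t. g k) + g 1"

lemma sum_good_words_Suc_low:
  assumes "Suc m \<le> h"
  shows "(\<Sum>v\<in>good_words h (Suc m). g (slack h v)) =
    (\<Sum>w\<in>good_words h m. low_transfer g (slack h w))"
proof -
  have "(\<Sum>i = first_slot h w..m. g (slack h (insert_at i (Suc m) w))) = low_transfer g (slack h w)"
    if "w \<in> good_words h m" for w
  proof -
    have len: "length w = m" and new: "\<forall>y\<in>set w. y < Suc m"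
      using that length_good_words by (auto simp: good_words_def)
    have lo: "first_slot h w \<le> m"
      using first_slot_le_length len by metis
    have "(\<Sum>i = first_slot h w..m. g (slack h (insert_at i (Suc m) w)))
        = (\<Sum>i = first_slot h w..<m. g (slack h (insert_at i (Suc m) w)))
          + g (slack h (insert_at m (Suc m) w))"
      using lo by (simp add: atLeastLessThanSuc_atLeastAtMost[symmetric])
    also have "\<dots> = (\<Sum>i = first_slot h w..<m. g 0) + g (Suc (slack h w))"
      using slack_insert_at_low[of _ w "Suc m" h] len new assms lo by simp
    also have "\<dots> = low_transfer g (slack h w)"
      using len by (simp add: low_transfer_def slack_def)
    finally show ?thesis .
  qed
  then show ?thesis
    by (simp add: sum_good_words_Suc)
qed

lemma sum_good_words_Suc_high:
  assumes "h \<le> m"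
  shows "(\<Sum>v\<in>good_words h (Suc m). g (slack h v)) =
    (\<Sum>w\<in>good_words h m. high_transfer g (slack h w))"
proof -
  have "(\<Sum>i = first_slot h w..m. g (slack h (insert_at i (Suc m) w))) = high_transfer g (slack h w)"
    if "w \<in> good_words h m" for w
  proof -
    have len: "length w = m" and new: "\<forall>y\<in>set w. y < Suc m"
      using that length_good_words by (auto simp: good_words_def)
    have lo: "first_slot h w \<le> m"
      using first_slot_le_length len by metis
    have high: "h < Suc m"
      using assms by simp
    have "(\<Sum>i = first_slot h w..m. g (slack h (insert_at i (Suc m) w)))
        = (\<Sum>i = first_slot h w..<m. g (slack h (insert_at i (Suc m) w)))
          + g (slack h (insert_at m (Suc m) w))"
      using lo by (simp add: atLeastLessThanSuc_atLeastAtMost[symmetric])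
    also have "\<dots> = (\<Sum>i = first_slot h w..<m. g (m - i)) + g 1"
      using slack_insert_at_high[of _ w "Suc m" h] len new high lo by simp
    also have "(\<Sum>i = first_slot h w..<m. g (m - i)) = (\<Sum>k = 1..slack h w. g k)"
      using len
      by (intro sum.reindex_bij_witness[of _ "\<lambda>k. m - k" "\<lambda>i. m - i"]) (auto simp: slack_def)
    finally show ?thesis
      by (simp add: high_transfer_def)
  qed
  then show ?thesis
    by (simp add: sum_good_words_Suc)
qed

lemma sum_good_words_low:
  "p \<le> h \<Longrightarrow> (\<Sum>w\<in>good_words h p. g (slack h w)) = (low_transfer ^^ p) g 0"
proof (induction p arbitrary: g)
  case 0
  then show ?case by (simp add: good_words_0 slack_def)
next
  case (Suc p)
  then show ?case
    by (simp add: sum_good_words_Suc_low funpow_Suc_right del: funpow.simps)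
qed

lemma sum_good_words_high:
  "(\<Sum>w\<in>good_words h (h + q). g (slack h w)) =
     (\<Sum>w\<in>good_words h h. (high_transfer ^^ q) g (slack h w))"
proof (induction q arbitrary: g)
  case (Suc q)
  then show ?case
    by (simp add: sum_good_words_Suc_high funpow_Suc_right del: funpow.simps)
qed simp

lemma card_good_words:
  "card (good_words h (h + h)) = (low_transfer ^^ h) ((high_transfer ^^ h) (\<lambda>_. 1)) 0"
  using sum_good_words_high[where g = "\<lambda>_. 1" and q = h] sum_good_words_low[of h h] by simp

lemma f_eq_card_good_words: "f m {2..h} = card (good_words h m)"
proof -
  have "{r. good_order m {2..h} r} = list_order ` good_words h m"
  proof (intro equalityI subsetI)
    fix r assume "r \<in> {r. good_order m {2..h} r}"
    then have r: "good_order m {2..h} r"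
      by simp
    then obtain w where "distinct w" "set w = {1..m}" "list_order w = r"
      using ex_list_order[of "{1..m}" r] by (auto simp: good_order_def)
    then show "r \<in> list_order ` good_words h m"
      using r good_order_list_order_iff by (auto simp: good_words_def)
  qed (auto simp: good_words_def good_order_list_order_iff)
  moreover have "inj_on list_order (good_words h m)"
    by (rule inj_onI) (auto simp: good_words_def intro: list_order_injective)
  ultimately show ?thesis
    by (simp add: f_def card_image)
qed

section \<open>Evaluating the iterated transfer operators\<close>

lemma central_binomial_weighted_sum:
  "(\<Sum>k\<le>m. ((m + k) choose k) * 2 ^ (m - k)) = (2::nat) ^ (2 * m)"
proof -
  have "(\<Sum>k\<le>m. real ((m + k) choose k) * 2 ^ (m - k))
      = 2 ^ m * (\<Sum>k\<le>m. real ((m + k) choose k) / 2 ^ k)"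
    by (auto simp: sum_distrib_left power_diff intro!: sum.cong)
  also have "\<dots> = 2 ^ m * 2 ^ m"
    using gbinomial_sum_nat_pow2[where 'a=real, of m] by (simp add: binomial_gbinomial)
  finally have "real (\<Sum>k\<le>m. ((m + k) choose k) * 2 ^ (m - k)) = real (2 ^ (2 * m))"
    by (simp add: mult_2 power_add)
  then show ?thesis
    by (simp only: of_nat_eq_iff)
qed

lemma Suc_plus_weighted_sum_eq_pow2: "Suc p + (\<Sum>t<p. t * 2 ^ (p - Suc t)) = (2::nat) ^ p"
proof (induction p)
  case (Suc p)
  have "(\<Sum>t<p. t * 2 ^ (Suc p - Suc t)) = 2 * (\<Sum>t<p. t * 2 ^ (p - Suc t))"
    by (auto simp: sum_distrib_left intro!: sum.cong) (metis Suc_diff_Suc power_Suc)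
  then show ?case using Suc by simp
qed simp

lemma hockey_stick_from_1:
  "(\<Sum>k = 1..t. (k + y) choose y) + 1 = (t + Suc y) choose Suc y"
  by (induction t) simp_all

lemma choose_add_commute: "(a + b) choose a = (a + b) choose (b::nat)"
  using binomial_symmetric[of a "a + b"] by simp

lemma low_transfer_iterate:
  "(low_transfer ^^ Suc p) g 0 = g (Suc p) + (\<Sum>t<p. 2 ^ (p - Suc t) * g t)"
proof (induction p arbitrary: g)
  case 0
  then show ?case by (simp add: low_transfer_def)
next
  case (Suc p)
  have "(low_transfer ^^ Suc (Suc p)) g 0 = (low_transfer ^^ Suc p) (low_transfer g) 0"
    by (simp only: funpow_Suc_right o_apply)
  also have "\<dots> = low_transfer g (Suc p) + (\<Sum>t<p. 2 ^ (p - Suc t) * low_transfer g t)"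
    by (rule Suc.IH)
  also have "\<dots> = g (Suc (Suc p)) + (Suc p + (\<Sum>t<p. t * 2 ^ (p - Suc t))) * g 0
      + (\<Sum>t<p. 2 ^ (p - Suc t) * g (Suc t))"
    by (simp add: low_transfer_def sum.distrib sum_distrib_left sum_distrib_right algebra_simps)
  also have "\<dots> = g (Suc (Suc p)) + (\<Sum>t<Suc p. 2 ^ (Suc p - Suc t) * g t)"
    by (simp only: Suc_plus_weighted_sum_eq_pow2 sum.lessThan_Suc_shift) simp
  finally show ?case .
qed

lemma high_transfer_iterate:
  "(high_transfer ^^ Suc p) (\<lambda>_. 1) t
     = ((t + Suc p) choose Suc p) + (\<Sum>y<p. 2 ^ (p - Suc y) * ((t + y) choose y))"
proof (induction p arbitrary: t)
  case 0
  then show ?case by (simp add: high_transfer_def)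
next
  case (Suc p)
  let ?G = "(high_transfer ^^ Suc p) (\<lambda>_. 1)"
  have G1: "?G 1 = Suc (Suc p) + (\<Sum>y<p. 2 ^ (p - Suc y) * Suc y)"
    using Suc.IH[of 1] by simp
  have sum_G: "(\<Sum>k = 1..t. ?G k) = (\<Sum>k = 1..t. (k + Suc p) choose Suc p)
      + (\<Sum>y<p. 2 ^ (p - Suc y) * (\<Sum>k = 1..t. (k + y) choose y))"
    by (simp only: Suc.IH sum.distrib sum_distrib_left sum.swap[of _ "{1..t}"])
  have "(high_transfer ^^ Suc (Suc p)) (\<lambda>_. 1) t = (\<Sum>k = 1..t. ?G k) + ?G 1"
    by (simp only: funpow.simps o_apply high_transfer_def)
  also have "\<dots> = ((\<Sum>k = 1..t. (k + Suc p) choose Suc p) + 1) + Suc p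
      + (\<Sum>y<p. 2 ^ (p - Suc y) * (((\<Sum>k = 1..t. (k + y) choose y) + 1) + y))"
    unfolding sum_G G1 by (simp add: sum.distrib algebra_simps)
  also have "\<dots> = ((t + Suc (Suc p)) choose Suc (Suc p)) + (Suc p + (\<Sum>y<p. y * 2 ^ (p - Suc y)))
      + (\<Sum>y<p. 2 ^ (p - Suc y) * ((t + Suc y) choose Suc y))"
    by (simp only: hockey_stick_from_1) (simp add: sum.distrib algebra_simps)
  also have "\<dots> = ((t + Suc (Suc p)) choose Suc (Suc p))
      + (\<Sum>y<Suc p. 2 ^ (Suc p - Suc y) * ((t + y) choose y))"
    by (simp only: Suc_plus_weighted_sum_eq_pow2 sum.lessThan_Suc_shift) simp
  finally show ?case .
qed

lemma central_binomial_split: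
  "((2 * Suc p) choose Suc p) + 2 * (\<Sum>y<p. 2 ^ (p - Suc y) * ((Suc p + y) choose y))
     = 2 ^ Suc (2 * p)"
proof -
  have "2 * Suc p = Suc (p + Suc p)" by simp
  then have "(2 * Suc p) choose Suc p = ((p + Suc p) choose p) + ((p + Suc p) choose Suc p)"
    by (simp only: binomial_Suc_Suc)
  also have "(p + Suc p) choose Suc p = (Suc p + p) choose p"
    by (simp only: choose_add_commute[symmetric] add.commute)
  finally have central: "(2 * Suc p) choose Suc p = 2 * ((Suc p + p) choose p)"
    by (simp only: add.commute[of p] mult_2)
  have "2 ^ (Suc p - y) = (4::nat) * 2 ^ (p - Suc y)" if "y < p" for y
  proof -
    have "Suc p - y = (p - Suc y) + 2" using that by simp
    then show ?thesis by (simp add: power_add)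
  qed
  then have "(\<Sum>y<p. ((Suc p + y) choose y) * 2 ^ (Suc p - y))
      = 4 * (\<Sum>y<p. 2 ^ (p - Suc y) * ((Suc p + y) choose y))"
    by (simp add: sum_distrib_left mult_ac)
  moreover have "(\<Sum>y\<le>Suc p. ((Suc p + y) choose y) * 2 ^ (Suc p - y))
      = (\<Sum>y<p. ((Suc p + y) choose y) * 2 ^ (Suc p - y))
        + ((Suc p + p) choose p) * 2 + ((2 * Suc p) choose Suc p)"
    by (simp only: sum.atMost_Suc lessThan_Suc_atMost[symmetric] sum.lessThan_Suc mult_2) simp
  moreover have "(\<Sum>y\<le>Suc p. ((Suc p + y) choose y) * 2 ^ (Suc p - y)) = 2 ^ (2 * Suc p)"
    by (rule central_binomial_weighted_sum)
  moreover have "(2::nat) ^ (2 * Suc p) = 2 * 2 ^ Suc (2 * p)"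
    by simp
  ultimately show ?thesis
    using central by linarith
qed

lemma transfer_closed_form:
  "(low_transfer ^^ Suc p) ((high_transfer ^^ Suc p) (\<lambda>_. 1)) 0
     = 2 ^ Suc (2 * p) + (\<Sum>t<p. \<Sum>y<p. 2 ^ (p - Suc t) * 2 ^ (p - Suc y) * ((t + y) choose y))"
proof -
  let ?G = "(high_transfer ^^ Suc p) (\<lambda>_. 1)"
  let ?S = "\<Sum>y<p. 2 ^ (p - Suc y) * ((Suc p + y) choose y)"
  have G: "?G t = ((Suc p + t) choose t) + (\<Sum>y<p. 2 ^ (p - Suc y) * ((t + y) choose y))" for t
  proof -
    have "(t + Suc p) choose Suc p = (Suc p + t) choose t"
      by (subst add.commute) (rule choose_add_commute)
    then show ?thesis by (simp only: high_transfer_iterate)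
  qed
  have "(\<Sum>t<p. 2 ^ (p - Suc t) * ?G t)
      = ?S + (\<Sum>t<p. \<Sum>y<p. 2 ^ (p - Suc t) * 2 ^ (p - Suc y) * ((t + y) choose y))"
    by (simp only: G add_mult_distrib2 sum.distrib sum_distrib_left mult.assoc)
  moreover have "?G (Suc p) = ((2 * Suc p) choose Suc p) + ?S"
    by (simp only: G mult_2)
  ultimately show ?thesis
    using central_binomial_split[of p] by (simp only: low_transfer_iterate)
qed

lemma double_sum_shift:
  "(\<Sum>i = 1..p. \<Sum>j = 1..p. ((i + j - 2) choose (i - 1)) * 2 ^ (2 * Suc p - i - j - 2))
     = (\<Sum>t<p. \<Sum>y<p. 2 ^ (p - Suc t) * 2 ^ (p - Suc y) * ((t + y) choose y))"
proof -
  have "((Suc t + Suc y - 2) choose (Suc t - 1)) * 2 ^ (2 * Suc p - Suc t - Suc y - 2)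
      = 2 ^ (p - Suc t) * 2 ^ (p - Suc y) * ((t + y) choose y)" if "t < p" "y < p" for t y
  proof -
    have "2 * Suc p - Suc t - Suc y - 2 = (p - Suc t) + (p - Suc y)"
      using that by simp
    then show ?thesis
      using choose_add_commute[of t y] by (simp add: power_add)
  qed
  then show ?thesis
    by (simp add: sum.atLeast1_atMost_eq)
qed

theorem proposition7:
  fixes n :: nat
  assumes "even n" and "n \<ge> 4"
  shows "f n {2..n div 2} =
    2 ^ (n - 1) + (\<Sum>i = 1..n div 2 - 1. \<Sum>j = 1..n div 2 - 1.
        ((i + j - 2) choose (i - 1)) * 2 ^ (n - i - j - 2))"
proof -
  obtain p where n: "n = 2 * Suc p"
    using assms by (metis dvd_def not_numeral_le_zero mult_0_right not0_implies_Suc)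
  have "f n {2..n div 2} = card (good_words (Suc p) (Suc p + Suc p))"
    by (simp add: f_eq_card_good_words n mult_2)
  also have "\<dots> = (low_transfer ^^ Suc p) ((high_transfer ^^ Suc p) (\<lambda>_. 1)) 0"
    by (rule card_good_words)
  also have "\<dots> = 2 ^ Suc (2 * p)
      + (\<Sum>t<p. \<Sum>y<p. 2 ^ (p - Suc t) * 2 ^ (p - Suc y) * ((t + y) choose y))"
    by (rule transfer_closed_form)
  also have "\<dots> = 2 ^ (n - 1) + (\<Sum>i = 1..n div 2 - 1. \<Sum>j = 1..n div 2 - 1.
        ((i + j - 2) choose (i - 1)) * 2 ^ (n - i - j - 2))"
  proof -
    have "2 * Suc p div 2 - 1 = p" "2 * Suc p - 1 = Suc (2 * p)"
      by simp_all
    then show ?thesis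
      unfolding n by (simp only: double_sum_shift)
  qed
  finally show ?thesis .
qed

end
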